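(* Let $T$ be a finite full binary tree with $N\ge 2$ leaves and fringe thickness at most $2$, and let $m=\lceil\log_2 N\rceil$. For $\sigma\in\{0,1\}$ put $M=m-\sigma$, $c^{\sigma}_{\min}=(N-2^M)\sigma$ and $c^{\sigma}_{\max}=\lfloor (2N-2^M)/3\rfloor$. Then there exist $\sigma\in\{0,1\}$ and an integer $c$ with $c^\sigma_{\min}\le c\le c^\sigma_{\max}$ such that $T$ has exactly $2^M-N+c$ leaves at depth $M-1$, exactly $2N-2^M-3c$ leaves at depth $M$, exactly $2c$ leaves at depth $M+1$, and no other leaves. Conversely, for every such $(\sigma,c)$ these numbers are nonnegative and are the leaf-depth counts of some full binary tree $T_{\sigma,c}$.
   Context: A full binary tree is one in which every node is a leaf or has exactly two children. The fringe thickness of a finite tree is the maximum difference between the depths of any two of its leaves. *)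

theory Defs
  imports Complex_Main
begin

datatype fbtree = Leaf | Node fbtree fbtree

fun leaf_depths :: "fbtree \<Rightarrow> nat list" where
  "leaf_depths Leaf = [0]"
| "leaf_depths (Node l r) = map Suc (leaf_depths l @ leaf_depths r)"

definition num_leaves :: "fbtree \<Rightarrow> nat" where
  "num_leaves t = length (leaf_depths t)"

definition leaves_at :: "fbtree \<Rightarrow> int \<Rightarrow> int" where
  "leaves_at t d = int (length (filter (\<lambda>k. int k = d) (leaf_depths t)))"

definition fringe_thickness :: "fbtree \<Rightarrow> nat" where
  "fringe_thickness t = Max (set (leaf_depths t)) - Min (set (leaf_depths t))"

definition m_of :: "nat \<Rightarrow> int" where
  "m_of N = \<lceil>log 2 (real N)\<rceil>"

definition M_of :: "nat \<Rightarrow> nat \<Rightarrow> int" where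
  "M_of N \<sigma> = m_of N - int \<sigma>"

definition c_min :: "nat \<Rightarrow> nat \<Rightarrow> int" where
  "c_min N \<sigma> = (int N - 2 ^ nat (M_of N \<sigma>)) * int \<sigma>"

definition c_max :: "nat \<Rightarrow> nat \<Rightarrow> int" where
  "c_max N \<sigma> = \<lfloor>real_of_int (2 * int N - 2 ^ nat (M_of N \<sigma>)) / 3\<rfloor>"

definition has_profile :: "fbtree \<Rightarrow> nat \<Rightarrow> nat \<Rightarrow> int \<Rightarrow> bool" where
  "has_profile t N \<sigma> c \<longleftrightarrow>
     (let M = M_of N \<sigma> in
        leaves_at t (M - 1) = 2 ^ nat M - int N + c
      \<and> leaves_at t M = 2 * int N - 2 ^ nat M - 3 * c
      \<and> leaves_at t (M + 1) = 2 * c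
      \<and> (\<forall>d \<in> set (leaf_depths t). int d \<in> {M - 1, M, M + 1}))"

end

(*
  The proof works with the multiset of leaf depths and Kraft's equality
  \<Sum> 2^(D - depth) = 2^D.  If the leaves of a tree lie in the window {j, j+1, j+2},
  with x, y, z leaves at the three levels, Kraft's equality reads 4x + 2y + z = 2^(j+2)
  and N = x + y + z.  Solving these two linear relations for x and y in terms of
  c = z/2 gives exactly the prescribed counts 2^M - N + c and 2N - 2^M - 3c with M = j + 1.

  Forward direction: a thin tree has such a window with 2^j < N \<le> 2^(j+2) (the perfect
  case N = 2^k uses the window {k-1, k, k+1}), and choosing \<sigma> by comparing N with
  2^(j+1) makes M = m - \<sigma> equal to j + 1.  Converse: for \<sigma> \<in> {0,1} the range
  c_min \<le> c \<le> c_max is equivalent to nonnegativity of the three counts, and any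
  nonnegative solution of 2a + b + c = 2^M is realised by grafting small gadget trees
  onto a perfect tree of height M - 1.  The range/nonnegativity equivalence also turns
  the profile produced in the forward direction into a c inside the admissible range.
*)

theory Submission
  imports Defs "HOL-Library.Discrete_Functions"
begin

lemma leaf_depths_nonempty: "leaf_depths t \<noteq> []"
  by (induction t) auto

lemma kraft_equality:
  assumes "set (leaf_depths t) \<subseteq> {..D}"
  shows "(\<Sum>d\<leftarrow>leaf_depths t. (2::nat) ^ (D - d)) = 2 ^ D"
  using assms
proof (induction t arbitrary: D)
  case Leaf
  then show ?case by simp
next
  case (Node l r)
  obtain d where "d \<in> set (leaf_depths l)"
    using leaf_depths_nonempty[of l] by (cases "leaf_depths l") auto
  with Node.prems obtain D' where D: "D = Suc D'"
    by (cases D) auto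
  have "(\<Sum>d\<leftarrow>leaf_depths l. (2::nat) ^ (D' - d)) = 2 ^ D'"
       "(\<Sum>d\<leftarrow>leaf_depths r. (2::nat) ^ (D' - d)) = 2 ^ D'"
    using Node.prems D by (auto intro!: Node.IH)
  then show ?case
    using D by (simp add: comp_def)
qed

lemma window_counts:
  assumes "set xs \<subseteq> {k..k+2}"
  shows "length xs = count_list xs k + count_list xs (k+1) + count_list xs (k+2)
       \<and> (\<Sum>d\<leftarrow>xs. (2::nat) ^ (k + 2 - d))
           = 4 * count_list xs k + 2 * count_list xs (k+1) + count_list xs (k+2)"
  using assms
proof (induction xs)
  case (Cons a xs)
  from Cons.prems consider "a = k" | "a = k + 1" | "a = k + 2"
    by fastforce
  then show ?case
    using Cons by cases auto
qed simp

lemma m_of_eq: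
  assumes "2 ^ j < N" "N \<le> 2 ^ Suc j"
  shows "m_of N = int (Suc j)"
  using ceiling_log_nat_eq_if[of 2 j N] assms by (simp add: m_of_def)

lemma dyadic_bracket:
  fixes N :: nat
  assumes "2 \<le> N"
  obtains j where "2 ^ j < N" "N \<le> 2 ^ Suc j"
proof
  show "2 ^ floor_log (N - 1) < N"
    using floor_log_exp2_le[of "N - 1"] assms by simp
  show "N \<le> 2 ^ Suc (floor_log (N - 1))"
    using floor_log_exp2_gt[of "N - 1"] by simp
qed

lemma thin_tree_window:
  assumes "fringe_thickness t \<le> 2"
  obtains k where "set (leaf_depths t) \<subseteq> {k..k+2}" "k \<in> set (leaf_depths t)"
proof
  let ?D = "set (leaf_depths t)"
  have "?D \<noteq> {}" and "finite ?D"
    using leaf_depths_nonempty[of t] by auto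
  then show "Min ?D \<in> ?D" by simp
  show "?D \<subseteq> {Min ?D..Min ?D + 2}"
  proof
    fix d assume "d \<in> ?D"
    then have "Min ?D \<le> d" "d \<le> Max ?D" using \<open>finite ?D\<close> by auto
    then show "d \<in> {Min ?D..Min ?D + 2}"
      using assms by (simp add: fringe_thickness_def)
  qed
qed

(* Kraft's equality with the window counts x, y, z gives 4x + 2y + z = 2^(k+2) and
   N = x + y + z with x \<ge> 1; hence 2^k \<le> N \<le> 2^(k+2), and N = 2^k forces y = z = 0. *)
lemma window_leaf_count:
  assumes window: "set (leaf_depths t) \<subseteq> {k..k+2}" and shallow: "k \<in> set (leaf_depths t)"
  shows "num_leaves t \<le> 2 ^ (k+2)"
    and "2 ^ k < num_leaves t \<or> set (leaf_depths t) \<subseteq> {k} \<and> num_leaves t = 2 ^ k"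
proof -
  define x where "x = count_list (leaf_depths t) k"
  define y where "y = count_list (leaf_depths t) (k+1)"
  define z where "z = count_list (leaf_depths t) (k+2)"
  have "set (leaf_depths t) \<subseteq> {..k+2}"
    using window by auto
  then have kraft: "4 * x + 2 * y + z = 4 * 2 ^ k"
    using window_counts[OF window] kraft_equality[of t "k+2"] by (simp add: x_def y_def z_def)
  have N: "num_leaves t = x + y + z"
    using window_counts[OF window] by (simp add: num_leaves_def x_def y_def z_def)
  have "x \<noteq> 0"
    using shallow by (simp add: x_def count_list_0_iff)
  then show "num_leaves t \<le> 2 ^ (k+2)"
    using kraft N by simp
  show "2 ^ k < num_leaves t \<or> set (leaf_depths t) \<subseteq> {k} \<and> num_leaves t = 2 ^ k"
  proof (cases "y = 0 \<and> z = 0")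
    case True
    then have "k + 1 \<notin> set (leaf_depths t)" "k + 2 \<notin> set (leaf_depths t)"
      by (simp_all add: y_def z_def count_list_0_iff)
    then have "set (leaf_depths t) \<subseteq> {k}"
      using window by (force simp: subset_iff le_Suc_eq numeral_eq_Suc)
    then show ?thesis
      using True kraft N by simp
  next
    case False
    then have "2 ^ k < num_leaves t"
      using kraft N by linarith
    then show ?thesis ..
  qed
qed

(* A thin tree therefore has a depth window {j, j+1, j+2} with 2^j < N \<le> 2^(j+2):
   take j = k in general and j = k - 1 in the perfect case N = 2^k. *)
lemma thin_tree_bracket:
  assumes "fringe_thickness t \<le> 2" "2 \<le> num_leaves t"
  obtains j where "set (leaf_depths t) \<subseteq> {j..j+2}"
    "2 ^ j < num_leaves t" "num_leaves t \<le> 2 ^ (j+2)"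
proof -
  obtain k where window: "set (leaf_depths t) \<subseteq> {k..k+2}" and shallow: "k \<in> set (leaf_depths t)"
    using thin_tree_window assms(1) by blast
  note count = window_leaf_count[OF window shallow]
  consider "2 ^ k < num_leaves t" | "set (leaf_depths t) \<subseteq> {k}" "num_leaves t = 2 ^ k"
    using count(2) by blast
  then show thesis
  proof cases
    case 1
    then show thesis
      using that window count(1) by blast
  next
    case 2
    with assms(2) obtain j where "k = Suc j"
      by (cases k) auto
    with 2 show thesis
      by (intro that[of j]) auto
  qed
qed

(* For 2^j < N \<le> 2^(j+2) one of the two admissible values of \<sigma> gives M = j + 1:
   \<sigma> = 0 if N \<le> 2^(j+1), and \<sigma> = 1 otherwise. *)
lemma M_of_choice:
  assumes "2 ^ j < N" "N \<le> 2 ^ (j+2)"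
  obtains \<sigma> where "\<sigma> \<in> {0, 1}" "M_of N \<sigma> = int (j+1)"
proof (cases "N \<le> 2 ^ Suc j")
  case True
  then show thesis
    using that[of 0] m_of_eq[of j N] assms by (simp add: M_of_def)
next
  case False
  then show thesis
    using that[of 1] m_of_eq[of "Suc j" N] assms by (simp add: M_of_def)
qed

lemma has_profile_shifted:
  assumes "M_of N \<sigma> = int (j+1)"
  shows "has_profile t N \<sigma> c \<longleftrightarrow>
      int (count_list (leaf_depths t) j) = 2 ^ (j+1) - int N + c
    \<and> int (count_list (leaf_depths t) (j+1)) = 2 * int N - 2 ^ (j+1) - 3 * c
    \<and> int (count_list (leaf_depths t) (j+2)) = 2 * c
    \<and> set (leaf_depths t) \<subseteq> {j..j+2}"
proof -
  have leaves_at_nat: "leaves_at t (int d) = int (count_list (leaf_depths t) d)" for d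
  proof -
    have "(\<lambda>k. int k = int d) = (=) d" by auto
    then show ?thesis by (simp add: leaves_at_def count_list_eq_length_filter)
  qed
  have shift: "int (j+1) - 1 = int j" "int (j+1) + 1 = int (j+2)"
    by simp_all
  have window: "int d \<in> {int j, int (j+1), int (j+2)} \<longleftrightarrow> d \<in> {j..j+2}" for d
    by auto
  show ?thesis
    unfolding has_profile_def Let_def
    by (simp only: assms nat_int shift leaves_at_nat window subset_iff Ball_def)
qed

(* The forward direction at the level of counts: if the leaves occupy the window
   {j, j+1, j+2} and M = j + 1, then the profile holds with c = (leaves at depth j+2) / 2;
   the linear relations are exactly Kraft's equality and N = x + y + z. *)
lemma profile_of_window:
  assumes window: "set (leaf_depths t) \<subseteq> {j..j+2}" and M: "M_of (num_leaves t) \<sigma> = int (j+1)"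
  shows "has_profile t (num_leaves t) \<sigma> (int (count_list (leaf_depths t) (j+2) div 2))"
proof -
  define x where "x = count_list (leaf_depths t) j"
  define y where "y = count_list (leaf_depths t) (j+1)"
  define z where "z = count_list (leaf_depths t) (j+2)"
  have "set (leaf_depths t) \<subseteq> {..j+2}"
    using window by auto
  then have kraft: "4 * x + 2 * y + z = 4 * 2 ^ j"
    using window_counts[OF window] kraft_equality[of t "j+2"] by (simp add: x_def y_def z_def)
  then have "int z = 2 * int (z div 2)"
    by presburger
  moreover have "int (num_leaves t) = int x + int y + int z"
    using window_counts[OF window] by (simp add: num_leaves_def x_def y_def z_def)
  moreover have "4 * int x + 2 * int y + int z = 4 * 2 ^ j"
    using arg_cong[OF kraft, of int] by simp
  ultimately show ?thesis
    unfolding has_profile_shifted[OF M] x_def [symmetric] y_def [symmetric] z_def [symmetric]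
    using window by simp
qed

lemma thin_tree_has_profile:
  assumes "fringe_thickness t \<le> 2" "2 \<le> num_leaves t"
  shows "\<exists>\<sigma> \<in> {0, 1}. \<exists>c. has_profile t (num_leaves t) \<sigma> c"
proof -
  obtain j where window: "set (leaf_depths t) \<subseteq> {j..j+2}"
    and "2 ^ j < num_leaves t" "num_leaves t \<le> 2 ^ (j+2)"
    using thin_tree_bracket assms by blast
  then obtain \<sigma> where "\<sigma> \<in> {0, 1}" "M_of (num_leaves t) \<sigma> = int (j+1)"
    using M_of_choice by blast
  then show ?thesis
    using profile_of_window[OF window] by blast
qed

lemma has_profile_nonneg:
  assumes "has_profile t N \<sigma> c"
  shows "let M = M_of N \<sigma> in
           0 \<le> 2 ^ nat M - int N + c \<and> 0 \<le> 2 * int N - 2 ^ nat M - 3 * c \<and> 0 \<le> 2 * c"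
proof -
  have "0 \<le> leaves_at t d" for d
    by (simp add: leaves_at_def)
  then show ?thesis
    using assms unfolding has_profile_def Let_def by metis
qed

(* The admissible range c_min \<le> c \<le> c_max is exactly the nonnegativity of the three
   prescribed counts: the upper bound is the middle count, and the lower bound is c \<ge> 0
   for \<sigma> = 0 (where 2^M \<ge> N) and the first count for \<sigma> = 1 (where 2^M < N). *)
lemma c_range_iff_nonneg:
  assumes "2 \<le> N" "\<sigma> \<in> {0, 1}"
  shows "c_min N \<sigma> \<le> c \<and> c \<le> c_max N \<sigma> \<longleftrightarrow>
         (let M = M_of N \<sigma> in
           0 \<le> 2 ^ nat M - int N + c \<and> 0 \<le> 2 * int N - 2 ^ nat M - 3 * c \<and> 0 \<le> 2 * c)"
proof -
  obtain j where bracket: "2 ^ j < N" "N \<le> 2 ^ Suc j"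
    using dyadic_bracket assms(1) by blast
  define P where "P = (2::int) ^ nat (M_of N \<sigma>)"
  have P: "P = 2 ^ (Suc j - \<sigma>)"
    using m_of_eq[OF bracket] assms(2) by (auto simp: P_def M_of_def)
  have "c \<le> \<lfloor>real_of_int v / 3\<rfloor> \<longleftrightarrow> 3 * c \<le> v" for v :: int
    by (auto simp: le_floor_iff)
  then have c_max: "c \<le> c_max N \<sigma> \<longleftrightarrow> 3 * c \<le> 2 * int N - P"
    unfolding c_max_def P_def .
  have "2 ^ j < int N" "int N \<le> 2 ^ Suc j"
    using bracket by (metis of_nat_less_iff of_nat_le_iff of_nat_numeral of_nat_power)+
  then have "\<sigma> = 0 \<Longrightarrow> int N \<le> P" "\<sigma> = 1 \<Longrightarrow> P < int N"
    using P by simp_all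
  then consider "\<sigma> = 0" "int N \<le> P" | "\<sigma> = 1" "P < int N"
    using assms(2) by blast
  then show ?thesis
    unfolding Let_def c_min_def P_def [symmetric] c_max by cases auto
qed

(* graft n ts hangs the 2^n trees ts below the leaves of the perfect tree of height n. *)
fun graft :: "nat \<Rightarrow> fbtree list \<Rightarrow> fbtree" where
  "graft 0 ts = hd ts"
| "graft (Suc n) ts = Node (graft n (take (2 ^ n) ts)) (graft n (drop (2 ^ n) ts))"

lemma graft_leaf_depths:
  assumes "length ts = 2 ^ n"
  shows "leaf_depths (graft n ts) = concat (map (\<lambda>t. map (\<lambda>d. n + d) (leaf_depths t)) ts)"
  using assms
proof (induction n arbitrary: ts)
  case 0
  then obtain t where "ts = [t]"
    by (cases ts) auto
  then show ?case by simp
next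
  case (Suc n)
  have "length (take (2 ^ n) ts) = 2 ^ n" "length (drop (2 ^ n) ts) = 2 ^ n"
    using Suc.prems by auto
  then have "leaf_depths (graft (Suc n) ts)
      = map Suc (concat (map (\<lambda>t. map (\<lambda>d. n + d) (leaf_depths t)) (take (2 ^ n) ts @ drop (2 ^ n) ts)))"
    using Suc.IH by (simp del: append_take_drop_id)
  also have "\<dots> = concat (map (\<lambda>t. map (\<lambda>d. Suc n + d) (leaf_depths t)) ts)"
    by (simp add: map_concat comp_def)
  finally show ?case .
qed

(* Since b and c have equal parity
   s, graft a leaves, b div 2 cherries, c div 2 perfect trees of height 2 and s copies of
   the tree with leaf depths 1, 2, 2 onto the perfect tree of height n. *)
lemma tree_with_depth_counts:
  assumes "2 * a + b + c = 2 ^ (n+1)"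
  obtains t where "count_list (leaf_depths t) n = a" "count_list (leaf_depths t) (n+1) = b"
    "count_list (leaf_depths t) (n+2) = 2 * c" "set (leaf_depths t) \<subseteq> {n..n+2}"
proof -
  define q r s where "q = b div 2" and "r = c div 2" and "s = b mod 2"
  have "even (2 * a + b + c)"
    using assms by simp
  then have "c mod 2 = s"
    unfolding s_def by presburger
  then have c: "c = 2 * r + s"
    unfolding r_def by (simp flip: \<open>c mod 2 = s\<close>)
  have b: "b = 2 * q + s"
    unfolding q_def s_def by simp
  with c have sizes: "a + q + r + s = 2 ^ n"
    using assms by simp
  define ts where "ts = replicate a Leaf @ replicate q (Node Leaf Leaf)
      @ replicate r (Node (Node Leaf Leaf) (Node Leaf Leaf)) @ replicate s (Node Leaf (Node Leaf Leaf))"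
  have "length ts = 2 ^ n"
    using sizes by (simp add: ts_def)
  then have depths: "leaf_depths (graft n ts) = concat (map (\<lambda>t. map (\<lambda>d. n + d) (leaf_depths t)) ts)"
    by (rule graft_leaf_depths)
  show thesis
    by (rule that[of "graft n ts"]; unfold depths)
       (auto simp: b c ts_def count_list_eq_length_filter filter_concat length_concat
          sum_list_triv sum_list_replicate)
qed

(* For
   M \<ge> 1 this is the previous lemma; M = 0 only occurs for N = 2, \<sigma> = 1, c = 1, which is
   realised by the cherry. *)
lemma profile_realizable:
  assumes "2 \<le> N" "\<sigma> \<in> {0, 1}"
    and nonneg: "let M = M_of N \<sigma> in
           0 \<le> 2 ^ nat M - int N + c \<and> 0 \<le> 2 * int N - 2 ^ nat M - 3 * c \<and> 0 \<le> 2 * c"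
  shows "\<exists>t. has_profile t N \<sigma> c"
proof (cases "nat (M_of N \<sigma>)")
  case 0
  obtain j where bracket: "2 ^ j < N" "N \<le> 2 ^ Suc j"
    using dyadic_bracket assms(1) by blast
  with 0 assms(2) have "\<sigma> = 1" "j = 0"
    using m_of_eq[OF bracket] by (auto simp: M_of_def)
  with bracket have "N = 2"
    by simp
  with 0 nonneg have "c = 1"
    by (simp add: Let_def)
  have "has_profile (Node Leaf Leaf) N \<sigma> c"
    using 0 \<open>N = 2\<close> \<open>c = 1\<close> \<open>\<sigma> = 1\<close> m_of_eq[OF bracket] \<open>j = 0\<close>
    by (simp add: has_profile_def M_of_def leaves_at_def)
  then show ?thesis ..
next
  case (Suc n)
  then have M: "M_of N \<sigma> = int (n+1)"
    by simp
  define a b where "a = nat (2 ^ (n+1) - int N + c)" and "b = nat (2 * int N - 2 ^ (n+1) - 3 * c)"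
  have "0 \<le> 2 ^ (n+1) - int N + c" "0 \<le> 2 * int N - 2 ^ (n+1) - 3 * c" "0 \<le> c"
    using nonneg unfolding Let_def M nat_int by auto
  then have a: "int a = 2 ^ (n+1) - int N + c" and b: "int b = 2 * int N - 2 ^ (n+1) - 3 * c"
    and c: "int (nat c) = c"
    by (simp_all add: a_def b_def)
  have "int (2 * a + b + nat c) = int (2 ^ (n+1))"
    using a b c by simp
  then obtain t where counts: "count_list (leaf_depths t) n = a" "count_list (leaf_depths t) (n+1) = b"
    "count_list (leaf_depths t) (n+2) = 2 * nat c" "set (leaf_depths t) \<subseteq> {n..n+2}"
    using tree_with_depth_counts by (metis of_nat_eq_iff)
  have "has_profile t N \<sigma> c"
    unfolding has_profile_shifted[OF M] counts(1-3) using a b c counts(4) by simp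
  then show ?thesis ..
qed

lemma thin_tree_profile_in_range:
  assumes "2 \<le> num_leaves t" "fringe_thickness t \<le> 2"
  shows "\<exists>\<sigma> \<in> {0, 1}. \<exists>c. c_min (num_leaves t) \<sigma> \<le> c \<and> c \<le> c_max (num_leaves t) \<sigma>
            \<and> has_profile t (num_leaves t) \<sigma> c"
proof -
  obtain \<sigma> c where "\<sigma> \<in> {0, 1}" and profile: "has_profile t (num_leaves t) \<sigma> c"
    using thin_tree_has_profile assms by blast
  moreover have "c_min (num_leaves t) \<sigma> \<le> c \<and> c \<le> c_max (num_leaves t) \<sigma>"
    using c_range_iff_nonneg has_profile_nonneg[OF profile] assms(1) \<open>\<sigma> \<in> {0, 1}\<close> by blast
  ultimately show ?thesis
    by blast
qed

theorem lemma7: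
  shows "(\<forall>T. num_leaves T \<ge> 2 \<and> fringe_thickness T \<le> 2 \<longrightarrow>
            (\<exists>\<sigma> \<in> {0, 1}. \<exists>c. c_min (num_leaves T) \<sigma> \<le> c \<and> c \<le> c_max (num_leaves T) \<sigma>
                \<and> has_profile T (num_leaves T) \<sigma> c))
       \<and> (\<forall>N \<sigma> c. N \<ge> 2 \<and> \<sigma> \<in> {0, 1} \<and> c_min N \<sigma> \<le> c \<and> c \<le> c_max N \<sigma> \<longrightarrow>
            (let M = M_of N \<sigma> in
               0 \<le> 2 ^ nat M - int N + c \<and> 0 \<le> 2 * int N - 2 ^ nat M - 3 * c \<and> 0 \<le> 2 * c)
            \<and> (\<exists>T. has_profile T N \<sigma> c))"
  using thin_tree_profile_in_range c_range_iff_nonneg profile_realizable by blast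

end
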